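(* Let $L,J\ge0$ and let $Q_{\ell,j}(x)$, $0\le\ell\le L$, $0\le j\le J$, be polynomials with nonnegative coefficients, with the associated allowed weighted paths and the generating functions $F^{[\ge k]}_{k_1,k_2}(x)$, $A_{k,i}(x)$, $\overline A_{k,i}(x)$, $q^{(k)}_h(x)$, $\overline d_k$, $\underline d_k$ as defined in the context. Then: (a) for $k\le k_1$: $F^{[\ge k]}_{k_1,k_1}(x)=1+\sum_{m=k}^{k_1}\overline A_{k_1,k_1-m}(x)F^{[\ge k]}_{m,k_1}(x)$; (b) for $k\le k_1<k_2$: $F^{[\ge k]}_{k_1,k_2}(x)=\sum_{m=k}^{k_1}\overline A_{k_1,k_1-m}(x)F^{[\ge k]}_{m,k_2}(x)+\sum_{m=k_1+1}^{k_2}A_{k_1,m-k_1}(x)F^{[\ge m]}_{m,k_2}(x)$; (c) for $k\le k_2<k_1$: $F^{[\ge k]}_{k_1,k_2}(x)=\sum_{m=k}^{k_1}\overline A_{k_1,k_1-m}(x)F^{[\ge k]}_{m,k_2}(x)$; (d) for $k\ge0$ and $0\le i\le\overline d_k$: \[ A_{k,i}(x)=q^{(k)}_i(x)+\sum_{i_1>i,\ i_2>i}q^{(k)}_{i_1}(x)\,F^{[\ge k+i+1]}_{k+i_1,k+i_2}(x)\,q^{(k+i_2)}_{-(i_2-i)}(x); \] (e) for $k\ge0$ and $0\le i\le\underline d_k$: \[ \overline A_{k,i}(x)=q^{(k)}_{-i}(x)+\sum_{i_1>0,\ i_2>0}q^{(k)}_{i_1}(x)\,F^{[\ge k+1]}_{k+i_1,k+i_2}(x)\,q^{(k+i_2)}_{-(i+i_2)}(x).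 \]
   Context: Step model: for each level $h\ge0$, the multiset $\mathcal S_h$ contains, for every triple $(\ell,j,r)$ with $0\le\ell\le L$, $0\le j\le\min(h,J)$, $r\ge0$, $[x^r]Q_{\ell,j}(x)\ne0$, one labelled step of displacement $(1+r,\ell-j)$ and weight $[x^r]Q_{\ell,j}(x)$ (distinct triples give distinct steps). An allowed path starting at level $k_1$ is a finite sequence of labelled steps $s_1\cdots s_M$ ($M\ge0$) starting at the point $(0,k_1)$ such that each step belongs to $\mathcal S_h$, $h$ being the level (second coordinate) of its starting point; its weight $w(p)$ is the product of the step weights (empty path: weight $1$). For $k_1,k_2\ge0$ and $0\le k\le\min(k_1,k_2)$, $F^{[\ge k]}_{k_1,k_2}(x)=\sum_{n\ge0}\sum_p w(p)x^n$, summed over allowed paths $p$ from $(0,k_1)$ to $(n,k_2)$ all of whose points have level $\ge k$. For $k,i\ge0$, $A_{k,i}(x)=\sum_{n>0}\sum_p w(p)x^n$ over allowed paths from $(0,k)$ to $(n,k+i)$ with at least one step whose points other than the first and the last all have level strictly greater than $k+i$ (prime walks). For $0\le i\le k$, $\overline A_{k,i}(x)=\sum_{n>0}\sum_pw(p)x^n$ over allowed paths from $(0,k)$ to $(n,k-i)$ with at least one step whose points other than the first and the last all have level strictly greater than $k$ (reverse prime walks). For $k\ge0$, $\overline d_k=\max\{\ell-j:0\le\ell\le L,\ 0\le j\le\min(k,J),\ Q_{\ell,j}\ne0\}$ and $\underline d_k=\max\{j-\ell:0\le\ell\le L,\ 0\le j\le\min(k,J),\ Q_{\ell,j}\ne0\}$.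 For an integer $h$ and a level $k\ge0$, $q^{(k)}_h(x)=x\sum Q_{\ell,j}(x)$, the sum over $0\le\ell\le L$, $0\le j\le\min(k,J)$ with $\ell-j=h$ (an empty sum is $0$). *)

theory Defs
  imports "HOL-Computational_Algebra.Computational_Algebra"
begin

text \<open>A labelled step is a triple (l, j, r): displacement (1 + r, l - j),
  weight coeff (Q l j) r.  Paths are lists of labelled steps; levels are integers.\<close>

type_synonym step = "nat \<times> nat \<times> nat"

fun step_ok :: "(nat \<Rightarrow> nat \<Rightarrow> real poly) \<Rightarrow> nat \<Rightarrow> nat \<Rightarrow> int \<Rightarrow> step \<Rightarrow> bool" where
  "step_ok Q L J h (l, j, r) \<longleftrightarrow>
     l \<le> L \<and> 0 \<le> h \<and> int j \<le> min h (int J) \<and> coeff (Q l j) r \<noteq> 0"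

fun levels :: "int \<Rightarrow> step list \<Rightarrow> int list" where
  "levels h [] = [h]"
| "levels h ((l, j, r) # ps) = h # levels (h + int l - int j) ps"

fun allowed :: "(nat \<Rightarrow> nat \<Rightarrow> real poly) \<Rightarrow> nat \<Rightarrow> nat \<Rightarrow> int \<Rightarrow> step list \<Rightarrow> bool" where
  "allowed Q L J h [] = True"
| "allowed Q L J h ((l, j, r) # ps) \<longleftrightarrow>
     step_ok Q L J h (l, j, r) \<and> allowed Q L J (h + int l - int j) ps"

definition plen :: "step list \<Rightarrow> nat" where
  "plen p = (\<Sum>s\<leftarrow>p. 1 + snd (snd s))"

definition pweight :: "(nat \<Rightarrow> nat \<Rightarrow> real poly) \<Rightarrow> step list \<Rightarrow> real" where
  "pweight Q p = (\<Prod>s\<leftarrow>p. coeff (Q (fst s) (fst (snd s))) (snd (snd s)))"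

definition Fge :: "(nat \<Rightarrow> nat \<Rightarrow> real poly) \<Rightarrow> nat \<Rightarrow> nat \<Rightarrow> nat \<Rightarrow> nat \<Rightarrow> nat \<Rightarrow> real fps" where
  "Fge Q L J k k1 k2 = Abs_fps (\<lambda>n.
     \<Sum>p | allowed Q L J (int k1) p \<and> plen p = n \<and>
           last (levels (int k1) p) = int k2 \<and>
           (\<forall>h\<in>set (levels (int k1) p). int k \<le> h). pweight Q p)"

definition Aprime :: "(nat \<Rightarrow> nat \<Rightarrow> real poly) \<Rightarrow> nat \<Rightarrow> nat \<Rightarrow> nat \<Rightarrow> nat \<Rightarrow> real fps" where
  "Aprime Q L J k i = Abs_fps (\<lambda>n. if n = 0 then 0 else
     \<Sum>p | allowed Q L J (int k) p \<and> p \<noteq> [] \<and> plen p = n \<and>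
           last (levels (int k) p) = int k + int i \<and>
           (\<forall>t. 0 < t \<and> t < length p \<longrightarrow> levels (int k) p ! t > int k + int i). pweight Q p)"

text \<open>overline A_{k,i}(x): reverse prime walks (meaningful for i <= k)\<close>
definition Abar :: "(nat \<Rightarrow> nat \<Rightarrow> real poly) \<Rightarrow> nat \<Rightarrow> nat \<Rightarrow> nat \<Rightarrow> nat \<Rightarrow> real fps" where
  "Abar Q L J k i = Abs_fps (\<lambda>n. if n = 0 then 0 else
     \<Sum>p | allowed Q L J (int k) p \<and> p \<noteq> [] \<and> plen p = n \<and>
           last (levels (int k) p) = int k - int i \<and>
           (\<forall>t. 0 < t \<and> t < length p \<longrightarrow> levels (int k) p ! t > int k). pweight Q p)"

definition dup :: "(nat \<Rightarrow> nat \<Rightarrow> real poly) \<Rightarrow> nat \<Rightarrow> nat \<Rightarrow> nat \<Rightarrow> int" where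
  "dup Q L J k = Max {int l - int j | l j. l \<le> L \<and> j \<le> min k J \<and> Q l j \<noteq> 0}"

definition ddown :: "(nat \<Rightarrow> nat \<Rightarrow> real poly) \<Rightarrow> nat \<Rightarrow> nat \<Rightarrow> nat \<Rightarrow> int" where
  "ddown Q L J k = Max {int j - int l | l j. l \<le> L \<and> j \<le> min k J \<and> Q l j \<noteq> 0}"

definition qk :: "(nat \<Rightarrow> nat \<Rightarrow> real poly) \<Rightarrow> nat \<Rightarrow> nat \<Rightarrow> nat \<Rightarrow> int \<Rightarrow> real fps" where
  "qk Q L J k h = fps_X * fps_of_poly
     (\<Sum>(l, j) \<in> {(l, j). l \<le> L \<and> j \<le> min k J \<and> int l - int j = h}. Q l j)"

end

theory Submission
  imports Defs
begin

(* Cutting a path at a well-chosen visit of a level factorises it uniquely. A path from k1 that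
   comes back to a level m <= k1 is cut at its first such return: a reverse prime walk from k1
   followed by a path from m. A nonempty path staying strictly above k1 is cut at the first visit
   of its lowest later level m: a prime walk followed by a path staying >= m. A prime walk of
   more than one step is its first step, a path strictly above the threshold, and its last step.
   The generating function is additive on disjoint unions and multiplicative on uniquely
   factorising concatenations, so these decompositions turn into (a)-(e). *)

fun next_level :: "int \<Rightarrow> step \<Rightarrow> int" where
  "next_level h (l, j, r) = h + int l - int j"

definition end_level :: "int \<Rightarrow> step list \<Rightarrow> int" where
  "end_level h p = last (levels h p)"

definition later_levels :: "int \<Rightarrow> step list \<Rightarrow> int set" where
  "later_levels h p = set (tl (levels h p))"

definition inner_levels :: "int \<Rightarrow> step list \<Rightarrow> int set" where
  "inner_levels h p = set (butlast (tl (levels h p)))"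

lemma levels_Cons: "levels h (s # p) = h # levels (next_level h s) p"
  by (cases s) auto

lemma levels_ne [simp]: "levels h p \<noteq> []"
  by (cases p) (auto simp: levels_Cons)

lemma hd_levels [simp]: "hd (levels h p) = h"
  by (cases p) (auto simp: levels_Cons)

lemma length_levels [simp]: "length (levels h p) = Suc (length p)"
  by (induction p arbitrary: h) (auto simp: levels_Cons)

lemma end_level_Nil [simp]: "end_level h [] = h"
  by (simp add: end_level_def)

lemma end_level_Cons [simp]: "end_level h (s # p) = end_level (next_level h s) p"
  by (simp add: end_level_def levels_Cons)

lemma end_level_append [simp]: "end_level h (p @ q) = end_level (end_level h p) q"
  by (induction p arbitrary: h) auto

lemma allowed_Cons:
  "allowed Q L J h (s # p) \<longleftrightarrow> step_ok Q L J h s \<and> allowed Q L J (next_level h s) p"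
  by (cases s) auto

lemma allowed_append:
  "allowed Q L J h (p @ q) \<longleftrightarrow> allowed Q L J h p \<and> allowed Q L J (end_level h p) q"
  by (induction p arbitrary: h) (auto simp: allowed_Cons)

lemma start_in_levels: "h \<in> set (levels h p)"
  using hd_in_set[OF levels_ne, of h p] by simp

lemma end_level_in_levels: "end_level h p \<in> set (levels h p)"
  by (simp add: end_level_def)

lemma set_levels_append:
  "set (levels h (p @ q)) = set (levels h p) \<union> set (levels (end_level h p) q)"
proof -
  have levels_append: "levels h (p @ q) = butlast (levels h p) @ levels (end_level h p) q"
    by (induction p arbitrary: h) (auto simp: levels_Cons)
  have "levels h p = butlast (levels h p) @ [end_level h p]"
    by (simp add: end_level_def)
  then have "set (levels h p) = set (butlast (levels h p)) \<union> {end_level h p}"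
    by (metis set_append set_simps)
  then show ?thesis
    using start_in_levels[of "end_level h p" q] by (auto simp: levels_append)
qed

lemma later_levels_Nil [simp]: "later_levels h [] = {}"
  by (simp add: later_levels_def)

lemma later_levels_Cons: "later_levels h (s # p) = set (levels (next_level h s) p)"
  by (simp add: later_levels_def levels_Cons)

lemma set_levels_eq_insert_later: "set (levels h p) = insert h (later_levels h p)"
  by (cases p) (auto simp: later_levels_def levels_Cons)

lemma end_level_in_later_levels: "p \<noteq> [] \<Longrightarrow> end_level h p \<in> later_levels h p"
  by (cases p) (auto simp: later_levels_Cons end_level_in_levels)

lemma later_levels_append:
  "later_levels h (p @ q) = later_levels h p \<union> later_levels (end_level h p) q"
proof (induction p arbitrary: h)
  case (Cons s p)
  show ?case
    using end_level_in_levels[of "next_level h s" p]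
      set_levels_eq_insert_later[of "end_level (next_level h s) p" q]
    by (auto simp: later_levels_Cons set_levels_append)
qed simp

lemma inner_levels_singleton [simp]: "inner_levels h [s] = {}"
  by (simp add: inner_levels_def levels_Cons)

lemma inner_levels_Cons:
  "p \<noteq> [] \<Longrightarrow> inner_levels h (s # p) = insert (next_level h s) (inner_levels (next_level h s) p)"
  by (cases p) (auto simp: inner_levels_def levels_Cons)

lemma later_levels_eq_insert_inner:
  "p \<noteq> [] \<Longrightarrow> later_levels h p = insert (end_level h p) (inner_levels h p)"
proof (induction p arbitrary: h)
  case (Cons s p)
  show ?case
  proof (cases "p = []")
    case False
    then show ?thesis
      using Cons.IH[of "next_level h s"]
      by (simp add: later_levels_Cons inner_levels_Cons set_levels_eq_insert_later insert_commute)
  qed (simp add: later_levels_Cons)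
qed simp

lemma inner_levels_append:
  "p \<noteq> [] \<Longrightarrow> q \<noteq> [] \<Longrightarrow>
     inner_levels h (p @ q) = inner_levels h p \<union> {end_level h p} \<union> inner_levels (end_level h p) q"
proof (induction p arbitrary: h)
  case (Cons s p)
  then show ?case
    by (cases "p = []") (auto simp: inner_levels_Cons)
qed simp

lemma inner_levels_Cons_snoc:
  "inner_levels h (s1 # mid @ [s2]) = set (levels (next_level h s1) mid)"
  by (cases "mid = []")
    (simp_all add: inner_levels_Cons inner_levels_append set_levels_eq_insert_later
      later_levels_eq_insert_inner)

lemma set_butlast_tl_conv_nth: "set (butlast (tl xs)) = {xs ! t | t. 0 < t \<and> t < length xs - 1}"
proof (cases xs)
  case (Cons x ys)
  have "set (butlast ys) = {butlast ys ! i | i. i < length ys - 1}"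
    by (auto simp: set_conv_nth)
  also have "\<dots> = {(x # ys) ! Suc i | i. i < length ys - 1}"
    by (metis length_butlast nth_Cons_Suc nth_butlast)
  also have "\<dots> = {(x # ys) ! t | t. 0 < t \<and> t < length (x # ys) - 1}"
    by force
  finally show ?thesis
    using Cons by simp
qed simp

lemma inner_levels_conv_nth: "inner_levels h p = {levels h p ! t | t. 0 < t \<and> t < length p}"
  by (simp add: inner_levels_def set_butlast_tl_conv_nth)

lemma split_at_first_hit:
  assumes "\<exists>x\<in>later_levels h u. P x"
  shows "\<exists>p q. u = p @ q \<and> p \<noteq> [] \<and> P (end_level h p) \<and> (\<forall>x\<in>inner_levels h p. \<not> P x)"
  using assms
proof (induction u arbitrary: h)
  case (Cons s u)
  show ?case
  proof (cases "P (next_level h s)")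
    case True
    then show ?thesis by (intro exI[of _ "[s]"] exI[of _ u]) auto
  next
    case False
    then have "\<exists>x\<in>later_levels (next_level h s) u. P x"
      using Cons.prems by (auto simp: later_levels_Cons set_levels_eq_insert_later)
    then obtain p q where "u = p @ q" "p \<noteq> []" "P (end_level (next_level h s) p)"
      "\<forall>x\<in>inner_levels (next_level h s) p. \<not> P x"
      using Cons.IH by blast
    with False show ?thesis
      by (intro exI[of _ "s # p"] exI[of _ q]) (auto simp: inner_levels_Cons)
  qed
qed simp

lemma first_hit_unique:
  assumes "p @ q = p' @ q'" "p \<noteq> []" "p' \<noteq> []" "P (end_level h p)" "P (end_level h p')"
    and "\<forall>x\<in>inner_levels h p. \<not> P x" "\<forall>x\<in>inner_levels h p'. \<not> P x"
  shows "p = p'"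
proof (rule ccontr)
  assume "p \<noteq> p'"
  with assms(1) obtain us where "us \<noteq> []" "p = p' @ us \<or> p' = p @ us"
    by (auto simp: append_eq_append_conv2)
  then show False
    using assms(2-7) inner_levels_append by blast
qed

lemma split_at_lowest_later_level:
  assumes "u \<noteq> []"
  obtains p q where "u = p @ q" "p \<noteq> []" "\<forall>x\<in>inner_levels h p. end_level h p < x"
    "\<forall>x\<in>later_levels h u. end_level h p \<le> x"
proof -
  define M where "M = Min (later_levels h u)"
  have fin: "finite (later_levels h u)"
    by (simp add: later_levels_def)
  have M_in: "M \<in> later_levels h u"
    using fin end_level_in_later_levels[OF assms] Min_in unfolding M_def by blast
  have M_le: "\<forall>x\<in>later_levels h u. M \<le> x"
    using fin by (simp add: M_def)
  obtain p q where pq: "u = p @ q" "p \<noteq> []" "end_level h p \<le> M" "\<forall>x\<in>inner_levels h p. M < x"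
    using split_at_first_hit[of h u "\<lambda>x. x \<le> M"] M_in by (auto simp: not_le)
  have "end_level h p \<in> later_levels h u"
    using end_level_in_later_levels[OF pq(2)] by (simp add: pq(1) later_levels_append)
  then have "end_level h p = M"
    using M_le pq(3) by force
  with pq M_le show ?thesis
    by (intro that) auto
qed

definition bounded_paths :: "nat \<Rightarrow> nat \<Rightarrow> step list set" where
  "bounded_paths L J = {p. \<forall>s\<in>set p. fst s \<le> L \<and> fst (snd s) \<le> J}"

lemma allowed_bounded_paths: "allowed Q L J h p \<Longrightarrow> p \<in> bounded_paths L J"
proof (induction p arbitrary: h)
  case (Cons s p)
  then show ?case by (cases s) (auto simp: bounded_paths_def allowed_Cons)
qed (simp add: bounded_paths_def)

lemma plen_append [simp]: "plen (p @ q) = plen p + plen q"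
  by (simp add: plen_def)

lemma plen_Nil [simp]: "plen [] = 0"
  by (simp add: plen_def)

lemma plen_Cons [simp]: "plen (s # p) = Suc (snd (snd s)) + plen p"
  by (simp add: plen_def)

lemma plen_eq_0_iff [simp]: "plen p = 0 \<longleftrightarrow> p = []"
  by (cases p) auto

lemma pweight_Cons [simp]: "pweight Q ((l, j, r) # p) = coeff (Q l j) r * pweight Q p"
  by (simp add: pweight_def)

lemma pweight_append [simp]: "pweight Q (p @ q) = pweight Q p * pweight Q q"
  by (simp add: pweight_def)

lemma pweight_Nil [simp]: "pweight Q [] = 1"
  by (simp add: pweight_def)

lemma finite_bounded_paths_plen_le: "finite {p \<in> bounded_paths L J. plen p \<le> n}"
proof (rule finite_subset)
  have plen_bounds: "length p \<le> plen p" "s \<in> set p \<Longrightarrow> snd (snd s) < plen p"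
    for p :: "step list" and s
    by (induction p) auto
  show "{p \<in> bounded_paths L J. plen p \<le> n} \<subseteq>
      {p. set p \<subseteq> {..L} \<times> {..J} \<times> {..<n} \<and> length p \<le> n}"
  proof (rule subsetI, rule CollectI, rule conjI)
    fix p assume p: "p \<in> {p \<in> bounded_paths L J. plen p \<le> n}"
    show "set p \<subseteq> {..L} \<times> {..J} \<times> {..<n}"
    proof
      fix s assume s: "s \<in> set p"
      have "fst s \<le> L" "fst (snd s) \<le> J"
        using p s by (auto simp: bounded_paths_def)
      moreover have "snd (snd s) < n"
        using p plen_bounds(2)[OF s] by simp
      ultimately show "s \<in> {..L} \<times> {..J} \<times> {..<n}"
        by (simp add: mem_Times_iff)
    qed
    show "length p \<le> n"
      using p plen_bounds(1)[of p] by simp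
  qed
  show "finite {p. set p \<subseteq> {..L} \<times> {..J} \<times> {..<n} \<and> length p \<le> n}"
    by (intro finite_lists_length_le) auto
qed

lemma finite_plen_slice:
  "S \<subseteq> bounded_paths L J \<Longrightarrow> finite {p \<in> S. plen p = n}"
  by (rule finite_subset[OF _ finite_bounded_paths_plen_le[of L J n]]) auto

definition path_gf :: "(nat \<Rightarrow> nat \<Rightarrow> real poly) \<Rightarrow> step list set \<Rightarrow> real fps" where
  "path_gf Q S = Abs_fps (\<lambda>n. \<Sum>p | p \<in> S \<and> plen p = n. pweight Q p)"

lemma path_gf_nth: "path_gf Q S $ n = (\<Sum>p | p \<in> S \<and> plen p = n. pweight Q p)"
  by (simp add: path_gf_def)

lemma path_gf_empty [simp]: "path_gf Q {} = 0"
  by (rule fps_ext) (simp add: path_gf_nth)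

lemma path_gf_Nil: "path_gf Q {[]} = 1"
proof (rule fps_ext)
  fix n
  have "{p. p \<in> {[]} \<and> plen p = n} = (if n = 0 then {[]} else {})"
    by auto
  then show "path_gf Q {[]} $ n = 1 $ n"
    by (simp add: path_gf_nth)
qed

lemma path_gf_Un:
  assumes "A \<subseteq> bounded_paths L J" "B \<subseteq> bounded_paths L J" "A \<inter> B = {}"
  shows "path_gf Q (A \<union> B) = path_gf Q A + path_gf Q B"
proof (rule fps_ext)
  fix n
  have "{p. p \<in> A \<union> B \<and> plen p = n} = {p \<in> A. plen p = n} \<union> {p \<in> B. plen p = n}"
    by auto
  then show "path_gf Q (A \<union> B) $ n = (path_gf Q A + path_gf Q B) $ n"
    using assms by (simp add: path_gf_nth sum.union_disjoint finite_plen_slice disjoint_iff)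
qed

lemma path_gf_UN:
  assumes "finite I" "\<And>i. i \<in> I \<Longrightarrow> U i \<subseteq> bounded_paths L J"
    and "\<And>i j. i \<in> I \<Longrightarrow> j \<in> I \<Longrightarrow> i \<noteq> j \<Longrightarrow> U i \<inter> U j = {}"
  shows "path_gf Q (\<Union>i\<in>I. U i) = (\<Sum>i\<in>I. path_gf Q (U i))"
  using assms
proof (induction I rule: finite_induct)
  case (insert i I)
  have "U i \<inter> (\<Union>j\<in>I. U j) = {}"
    using insert.prems(2)[of i] insert.hyps(2) by blast
  then have "path_gf Q (U i \<union> (\<Union>j\<in>I. U j)) = path_gf Q (U i) + path_gf Q (\<Union>j\<in>I. U j)"
    using insert.prems(1) by (intro path_gf_Un[of _ L J]) auto
  with insert show ?case by simp
qed simp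

definition conc :: "step list set \<Rightarrow> step list set \<Rightarrow> step list set" where
  "conc S T = {p @ q | p q. p \<in> S \<and> q \<in> T}"

lemma in_conc_iff: "u \<in> conc S T \<longleftrightarrow> (\<exists>p\<in>S. \<exists>q\<in>T. u = p @ q)"
  by (auto simp: conc_def)

lemma append_in_conc: "p \<in> S \<Longrightarrow> q \<in> T \<Longrightarrow> p @ q \<in> conc S T"
  by (auto simp: conc_def)

lemma conc_bounded_paths:
  "S \<subseteq> bounded_paths L J \<Longrightarrow> T \<subseteq> bounded_paths L J \<Longrightarrow> conc S T \<subseteq> bounded_paths L J"
  by (fastforce simp: conc_def bounded_paths_def subset_iff)

lemma path_gf_conc:
  assumes S: "S \<subseteq> bounded_paths L J" and T: "T \<subseteq> bounded_paths L J"
    and unique: "\<And>p q p' q'. p \<in> S \<Longrightarrow> q \<in> T \<Longrightarrow> p' \<in> S \<Longrightarrow> q' \<in> T \<Longrightarrow> p @ q = p' @ q' \<Longrightarrow> p = p'"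
  shows "path_gf Q (conc S T) = path_gf Q S * path_gf Q T"
proof (rule fps_ext)
  fix n
  define P where "P = {x \<in> S \<times> T. plen (fst x) + plen (snd x) = n}"
  have "P \<subseteq> {p \<in> bounded_paths L J. plen p \<le> n} \<times> {p \<in> bounded_paths L J. plen p \<le> n}"
    using S T by (auto simp: P_def)
  then have "finite P"
    using finite_bounded_paths_plen_le finite_subset by blast
  have "inj_on (\<lambda>x. fst x @ snd x) P"
    using unique by (force simp: inj_on_def P_def)
  moreover have "{u. u \<in> conc S T \<and> plen u = n} = (\<lambda>x. fst x @ snd x) ` P"
    by (auto simp: P_def conc_def image_iff) blast+
  ultimately have "path_gf Q (conc S T) $ n = (\<Sum>x\<in>P. pweight Q (fst x @ snd x))"
    by (simp add: path_gf_nth sum.reindex del: pweight_append)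
  also have "\<dots> = (\<Sum>a\<in>{..n}. \<Sum>x\<in>{x. x \<in> P \<and> plen (fst x) = a}. pweight Q (fst x @ snd x))"
    by (rule sum.group[symmetric, OF \<open>finite P\<close>]) (auto simp: P_def)
  also have "\<dots> = (\<Sum>a\<in>{..n}. (\<Sum>p | p \<in> S \<and> plen p = a. pweight Q p) *
                          (\<Sum>q | q \<in> T \<and> plen q = n - a. pweight Q q))"
  proof (rule sum.cong[OF refl])
    fix a assume "a \<in> {..n}"
    then have "{x. x \<in> P \<and> plen (fst x) = a} = {p \<in> S. plen p = a} \<times> {q \<in> T. plen q = n - a}"
      by (auto simp: P_def)
    then show "(\<Sum>x\<in>{x. x \<in> P \<and> plen (fst x) = a}. pweight Q (fst x @ snd x)) =
        (\<Sum>p | p \<in> S \<and> plen p = a. pweight Q p) * (\<Sum>q | q \<in> T \<and> plen q = n - a. pweight Q q)"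
      by (simp add: sum_product sum.cartesian_product case_prod_beta)
  qed
  also have "\<dots> = (path_gf Q S * path_gf Q T) $ n"
    by (simp add: fps_mult_nth path_gf_nth atLeast0AtMost)
  finally show "path_gf Q (conc S T) $ n = (path_gf Q S * path_gf Q T) $ n" .
qed

lemma path_gf_UN_conc:
  assumes "finite I"
    and bounded: "\<And>i. i \<in> I \<Longrightarrow> S i \<subseteq> bounded_paths L J \<and> T i \<subseteq> bounded_paths L J"
    and unique: "\<And>i i' p q p' q'. i \<in> I \<Longrightarrow> i' \<in> I \<Longrightarrow> p \<in> S i \<Longrightarrow> q \<in> T i \<Longrightarrow>
                   p' \<in> S i' \<Longrightarrow> q' \<in> T i' \<Longrightarrow> p @ q = p' @ q' \<Longrightarrow> i = i' \<and> p = p'"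
  shows "path_gf Q (\<Union>i\<in>I. conc (S i) (T i)) = (\<Sum>i\<in>I. path_gf Q (S i) * path_gf Q (T i))"
proof -
  have "path_gf Q (\<Union>i\<in>I. conc (S i) (T i)) = (\<Sum>i\<in>I. path_gf Q (conc (S i) (T i)))"
  proof (rule path_gf_UN[OF \<open>finite I\<close>])
    show "conc (S i) (T i) \<subseteq> bounded_paths L J" if "i \<in> I" for i
      using bounded[OF that] conc_bounded_paths by blast
    show "conc (S i) (T i) \<inter> conc (S i') (T i') = {}" if "i \<in> I" "i' \<in> I" "i \<noteq> i'" for i i'
      using unique[OF that(1,2)] that(3) by (fastforce simp: conc_def)
  qed
  also have "\<dots> = (\<Sum>i\<in>I. path_gf Q (S i) * path_gf Q (T i))"
    using bounded unique by (intro sum.cong[OF refl] path_gf_conc[of _ L J]) blast+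
  finally show ?thesis .
qed

context
  fixes Q :: "nat \<Rightarrow> nat \<Rightarrow> real poly" and L J :: nat
begin

definition walks_ge :: "nat \<Rightarrow> nat \<Rightarrow> nat \<Rightarrow> step list set" where
  "walks_ge k k1 k2 = {p. allowed Q L J (int k1) p \<and> end_level (int k1) p = int k2 \<and>
     (\<forall>h\<in>set (levels (int k1) p). int k \<le> h)}"

definition prime_walks :: "nat \<Rightarrow> int \<Rightarrow> int \<Rightarrow> step list set" where
  "prime_walks k e c = {p. allowed Q L J (int k) p \<and> p \<noteq> [] \<and> end_level (int k) p = e \<and>
     (\<forall>x\<in>inner_levels (int k) p. c < x)}"

definition single_steps :: "nat \<Rightarrow> int \<Rightarrow> step list set" where
  "single_steps k e = {[s] | s. step_ok Q L J (int k) s \<and> next_level (int k) s = e}"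

lemma walks_ge_bounded: "walks_ge k k1 k2 \<subseteq> bounded_paths L J"
  by (auto simp: walks_ge_def intro: allowed_bounded_paths)

lemma prime_walks_bounded: "prime_walks k e c \<subseteq> bounded_paths L J"
  by (auto simp: prime_walks_def intro: allowed_bounded_paths)

lemma single_steps_bounded: "single_steps k e \<subseteq> bounded_paths L J"
proof
  fix p assume "p \<in> single_steps k e"
  then obtain s where "p = [s]" "step_ok Q L J (int k) s"
    by (auto simp: single_steps_def)
  then have "allowed Q L J (int k) p"
    by (cases s) auto
  then show "p \<in> bounded_paths L J"
    by (rule allowed_bounded_paths)
qed

lemma Fge_eq_path_gf: "Fge Q L J k k1 k2 = path_gf Q (walks_ge k k1 k2)"
  unfolding Fge_def path_gf_def walks_ge_def end_level_def
  by (rule arg_cong[where f = Abs_fps], rule ext, rule sum.cong) auto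

lemma path_gf_prime_walks_conv:
  "path_gf Q (prime_walks k e c) = Abs_fps (\<lambda>n. if n = 0 then 0 else
     \<Sum>p | allowed Q L J (int k) p \<and> p \<noteq> [] \<and> plen p = n \<and> last (levels (int k) p) = e \<and>
       (\<forall>t. 0 < t \<and> t < length p \<longrightarrow> levels (int k) p ! t > c). pweight Q p)"
  unfolding path_gf_def
proof (rule arg_cong[where f = Abs_fps], rule ext)
  fix n
  show "(\<Sum>p | p \<in> prime_walks k e c \<and> plen p = n. pweight Q p) = (if n = 0 then 0 else
     \<Sum>p | allowed Q L J (int k) p \<and> p \<noteq> [] \<and> plen p = n \<and> last (levels (int k) p) = e \<and>
       (\<forall>t. 0 < t \<and> t < length p \<longrightarrow> levels (int k) p ! t > c). pweight Q p)"
    by (auto simp: prime_walks_def end_level_def inner_levels_conv_nth intro!: sum.cong)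
qed

lemma Aprime_eq_path_gf: "Aprime Q L J k i = path_gf Q (prime_walks k (int k + int i) (int k + int i))"
  by (simp add: Aprime_def path_gf_prime_walks_conv)

lemma Abar_eq_path_gf: "Abar Q L J k i = path_gf Q (prime_walks k (int k - int i) (int k))"
  by (simp add: Abar_def path_gf_prime_walks_conv)

lemma qk_eq_0:
  assumes "\<nexists>l j. l \<le> L \<and> j \<le> min k J \<and> int l - int j = h"
  shows "qk Q L J k h = 0"
proof -
  have empty: "{(l, j). l \<le> L \<and> j \<le> min k J \<and> int l - int j = h} = {}"
    using assms by auto
  show ?thesis
    unfolding qk_def empty by simp
qed

lemma path_gf_single_steps: "path_gf Q (single_steps k e) = qk Q L J k (e - int k)"
proof (rule fps_ext)
  fix n
  define E where "E = {(l, j). l \<le> L \<and> j \<le> min k J \<and> int l - int j = e - int k}"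
  have "finite E"
    by (rule finite_subset[of _ "{..L} \<times> {..J}"]) (auto simp: E_def)
  show "path_gf Q (single_steps k e) $ n = qk Q L J k (e - int k) $ n"
  proof (cases n)
    case 0
    then show ?thesis
      by (auto simp: path_gf_nth qk_def single_steps_def)
  next
    case (Suc r)
    define D where "D = {(l, j) \<in> E. coeff (Q l j) r \<noteq> 0}"
    have "{p. p \<in> single_steps k e \<and> plen p = n} = (\<lambda>(l, j). [(l, j, r)]) ` D"
      using Suc by (force simp: single_steps_def D_def E_def)
    moreover have "inj_on (\<lambda>(l, j). [(l, j, r)]) D"
      by (auto simp: inj_on_def)
    ultimately have "path_gf Q (single_steps k e) $ n = (\<Sum>(l, j)\<in>D. coeff (Q l j) r)"
      by (auto simp: path_gf_nth sum.reindex intro!: sum.cong)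
    also have "\<dots> = (\<Sum>(l, j)\<in>E. coeff (Q l j) r)"
      using \<open>finite E\<close> by (intro sum.mono_neutral_left) (auto simp: D_def)
    also have "\<dots> = qk Q L J k (e - int k) $ n"
      using Suc by (simp add: qk_def coeff_sum E_def case_prod_beta)
    finally show ?thesis .
  qed
qed

lemma prime_walks_append_unique:
  assumes "p \<in> prime_walks h m c" "p' \<in> prime_walks h m' c" "m \<le> c" "m' \<le> c" "p @ q = p' @ q'"
  shows "p = p'"
  using first_hit_unique[of p q p' q' "\<lambda>x. x \<le> c" "int h"] assms
  by (auto simp: prime_walks_def not_le)

lemma set_levels_prime_walk:
  "p \<in> prime_walks h m c \<Longrightarrow>
     set (levels (int h) p) = insert (int h) (insert m (inner_levels (int h) p))"
  by (simp add: prime_walks_def set_levels_eq_insert_later later_levels_eq_insert_inner)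

lemma walks_ge_revisiting_eq:
  assumes "k \<le> k1"
  shows "{u \<in> walks_ge k k1 k2. \<exists>x\<in>later_levels (int k1) u. x \<le> int k1} =
    (\<Union>m\<in>{k..k1}. conc (prime_walks k1 (int m) (int k1)) (walks_ge k m k2))"
proof (intro subset_antisym subsetI)
  fix u assume "u \<in> {u \<in> walks_ge k k1 k2. \<exists>x\<in>later_levels (int k1) u. x \<le> int k1}"
  then have u: "u \<in> walks_ge k k1 k2" and "\<exists>x\<in>later_levels (int k1) u. x \<le> int k1"
    by auto
  then obtain p q where pq: "u = p @ q" "p \<noteq> []" "end_level (int k1) p \<le> int k1"
    "\<forall>x\<in>inner_levels (int k1) p. int k1 < x"
    using split_at_first_hit[of "int k1" u "\<lambda>x. x \<le> int k1"] by (auto simp: not_le)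
  define m where "m = nat (end_level (int k1) p)"
  have "end_level (int k1) p \<in> set (levels (int k1) u)"
    using pq(1) end_level_in_levels set_levels_append by blast
  then have "int k \<le> end_level (int k1) p"
    using u by (auto simp: walks_ge_def)
  then have m: "int m = end_level (int k1) p" "m \<in> {k..k1}"
    using pq(3) by (auto simp: m_def)
  have "p \<in> prime_walks k1 (int m) (int k1)" "q \<in> walks_ge k m k2"
    using u pq m by (auto simp: prime_walks_def walks_ge_def allowed_append set_levels_append)
  with m(2) pq(1) show "u \<in> (\<Union>m\<in>{k..k1}. conc (prime_walks k1 (int m) (int k1)) (walks_ge k m k2))"
    unfolding UN_iff in_conc_iff by blast
next
  fix u assume "u \<in> (\<Union>m\<in>{k..k1}. conc (prime_walks k1 (int m) (int k1)) (walks_ge k m k2))"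
  then obtain m p q where m: "m \<in> {k..k1}" and p: "p \<in> prime_walks k1 (int m) (int k1)"
    and q: "q \<in> walks_ge k m k2" and u: "u = p @ q"
    by (auto simp: in_conc_iff)
  have "u \<in> walks_ge k k1 k2"
    using p q m assms set_levels_prime_walk[OF p]
    by (auto simp: u walks_ge_def prime_walks_def allowed_append set_levels_append)
  moreover have "int m \<in> later_levels (int k1) u"
    using p end_level_in_later_levels[of p "int k1"] by (auto simp: u later_levels_append prime_walks_def)
  moreover have "int m \<le> int k1"
    using m by simp
  ultimately show "u \<in> {u \<in> walks_ge k k1 k2. \<exists>x\<in>later_levels (int k1) u. x \<le> int k1}"
    by blast
qed

lemma later_levels_prime_walk_append:
  assumes p: "p \<in> prime_walks k1 (int m) (int m)" and q: "q \<in> walks_ge m m k2"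
  shows "int m \<in> later_levels (int k1) (p @ q)"
    and "x \<in> later_levels (int k1) (p @ q) \<Longrightarrow> int m \<le> x"
proof -
  have split: "later_levels (int k1) (p @ q) =
      insert (int m) (inner_levels (int k1) p) \<union> later_levels (int m) q"
    using p by (simp add: prime_walks_def later_levels_append later_levels_eq_insert_inner)
  then show "int m \<in> later_levels (int k1) (p @ q)"
    by simp
  show "int m \<le> x" if "x \<in> later_levels (int k1) (p @ q)"
    using that p q by (auto simp: split prime_walks_def walks_ge_def set_levels_eq_insert_later)
qed

lemma walks_ge_above_eq:
  assumes "k \<le> k1"
  shows "{u \<in> walks_ge k k1 k2. u \<noteq> [] \<and> (\<forall>x\<in>later_levels (int k1) u. int k1 < x)} =
    (\<Union>m\<in>{k1+1..k2}. conc (prime_walks k1 (int m) (int m)) (walks_ge m m k2))"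
proof (intro subset_antisym subsetI)
  fix u assume "u \<in> {u \<in> walks_ge k k1 k2. u \<noteq> [] \<and> (\<forall>x\<in>later_levels (int k1) u. int k1 < x)}"
  then have u: "u \<in> walks_ge k k1 k2" "u \<noteq> []" and above: "\<forall>x\<in>later_levels (int k1) u. int k1 < x"
    by auto
  obtain p q where pq: "u = p @ q" "p \<noteq> []" "\<forall>x\<in>inner_levels (int k1) p. end_level (int k1) p < x"
    and lowest: "\<forall>x\<in>later_levels (int k1) u. end_level (int k1) p \<le> x"
    using split_at_lowest_later_level[OF u(2)] by blast
  define m where "m = nat (end_level (int k1) p)"
  have "end_level (int k1) p \<in> later_levels (int k1) u"
    using end_level_in_later_levels[OF pq(2)] by (simp add: pq(1) later_levels_append)
  moreover have "end_level (int k1) p \<le> end_level (int k1) u"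
    using lowest end_level_in_later_levels[OF u(2)] by blast
  then have "end_level (int k1) p \<le> int k2"
    using u(1) by (simp add: walks_ge_def)
  ultimately have m: "int m = end_level (int k1) p" "m \<in> {k1+1..k2}"
    using above by (auto simp: m_def)
  have "\<forall>x\<in>set (levels (int m) q). int m \<le> x"
    using lowest m(1) by (auto simp: pq(1) set_levels_eq_insert_later later_levels_append)
  then have "p \<in> prime_walks k1 (int m) (int m)" "q \<in> walks_ge m m k2"
    using u pq m by (auto simp: prime_walks_def walks_ge_def allowed_append)
  with m(2) pq(1) show "u \<in> (\<Union>m\<in>{k1+1..k2}. conc (prime_walks k1 (int m) (int m)) (walks_ge m m k2))"
    unfolding UN_iff in_conc_iff by blast
next
  fix u assume "u \<in> (\<Union>m\<in>{k1+1..k2}. conc (prime_walks k1 (int m) (int m)) (walks_ge m m k2))"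
  then obtain m p q where m: "m \<in> {k1+1..k2}" and p: "p \<in> prime_walks k1 (int m) (int m)"
    and q: "q \<in> walks_ge m m k2" and u: "u = p @ q"
    by (auto simp: in_conc_iff)
  have "u \<in> walks_ge k k1 k2"
    using p q m assms set_levels_prime_walk[OF p]
    by (fastforce simp: u walks_ge_def prime_walks_def allowed_append set_levels_append)
  moreover have "\<forall>x\<in>later_levels (int k1) u. int k1 < x"
    using later_levels_prime_walk_append(2)[OF p q] m u by fastforce
  ultimately show "u \<in> {u \<in> walks_ge k k1 k2. u \<noteq> [] \<and> (\<forall>x\<in>later_levels (int k1) u. int k1 < x)}"
    using p u by (simp add: prime_walks_def)
qed

lemma path_gf_walks_ge_revisiting:
  assumes "k \<le> k1"
  shows "path_gf Q {u \<in> walks_ge k k1 k2. \<exists>x\<in>later_levels (int k1) u. x \<le> int k1} =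
    (\<Sum>m=k..k1. Abar Q L J k1 (k1 - m) * Fge Q L J k m k2)"
proof -
  have "path_gf Q {u \<in> walks_ge k k1 k2. \<exists>x\<in>later_levels (int k1) u. x \<le> int k1} =
      (\<Sum>m=k..k1. path_gf Q (prime_walks k1 (int m) (int k1)) * path_gf Q (walks_ge k m k2))"
    unfolding walks_ge_revisiting_eq[OF assms]
  proof (rule path_gf_UN_conc)
    show "prime_walks k1 (int m) (int k1) \<subseteq> bounded_paths L J \<and> walks_ge k m k2 \<subseteq> bounded_paths L J"
      for m
      using prime_walks_bounded walks_ge_bounded by blast
    fix m m' p q p' q'
    assume "m \<in> {k..k1}" "m' \<in> {k..k1}" and p: "p \<in> prime_walks k1 (int m) (int k1)"
      and "q \<in> walks_ge k m k2" and p': "p' \<in> prime_walks k1 (int m') (int k1)"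
      and "q' \<in> walks_ge k m' k2" and "p @ q = p' @ q'"
    then have "p = p'"
      using prime_walks_append_unique[OF p p'] by simp
    with p p' show "m = m' \<and> p = p'"
      by (auto simp: prime_walks_def)
  qed simp
  also have "\<dots> = (\<Sum>m=k..k1. Abar Q L J k1 (k1 - m) * Fge Q L J k m k2)"
    by (intro sum.cong refl) (simp add: Abar_eq_path_gf Fge_eq_path_gf of_nat_diff)
  finally show ?thesis .
qed

lemma path_gf_walks_ge_above:
  assumes "k \<le> k1"
  shows "path_gf Q {u \<in> walks_ge k k1 k2. u \<noteq> [] \<and> (\<forall>x\<in>later_levels (int k1) u. int k1 < x)} =
    (\<Sum>m=k1+1..k2. Aprime Q L J k1 (m - k1) * Fge Q L J m m k2)"
proof -
  have "path_gf Q {u \<in> walks_ge k k1 k2. u \<noteq> [] \<and> (\<forall>x\<in>later_levels (int k1) u. int k1 < x)} =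
      (\<Sum>m=k1+1..k2. path_gf Q (prime_walks k1 (int m) (int m)) * path_gf Q (walks_ge m m k2))"
    unfolding walks_ge_above_eq[OF assms]
  proof (rule path_gf_UN_conc)
    show "prime_walks k1 (int m) (int m) \<subseteq> bounded_paths L J \<and> walks_ge m m k2 \<subseteq> bounded_paths L J"
      for m
      using prime_walks_bounded walks_ge_bounded by blast
    fix m m' p q p' q'
    assume p: "p \<in> prime_walks k1 (int m) (int m)" and q: "q \<in> walks_ge m m k2"
      and p': "p' \<in> prime_walks k1 (int m') (int m')" and q': "q' \<in> walks_ge m' m' k2"
      and eq: "p @ q = p' @ q'"
    have "int m \<le> int m'" "int m' \<le> int m"
      using later_levels_prime_walk_append[OF p q] later_levels_prime_walk_append[OF p' q'] eq
      by metis+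
    then have "m = m'"
      by simp
    with p p' eq show "m = m' \<and> p = p'"
      using prime_walks_append_unique by blast
  qed simp
  also have "\<dots> = (\<Sum>m=k1+1..k2. Aprime Q L J k1 (m - k1) * Fge Q L J m m k2)"
    by (intro sum.cong refl) (simp add: Aprime_eq_path_gf Fge_eq_path_gf of_nat_diff)
  finally show ?thesis .
qed

lemma Fge_first_passage:
  assumes "k \<le> k1"
  shows "Fge Q L J k k1 k2 = (if k1 = k2 then 1 else 0)
    + (\<Sum>m=k..k1. Abar Q L J k1 (k1 - m) * Fge Q L J k m k2)
    + (\<Sum>m=k1+1..k2. Aprime Q L J k1 (m - k1) * Fge Q L J m m k2)"
proof -
  define R where "R = {u \<in> walks_ge k k1 k2. \<exists>x\<in>later_levels (int k1) u. x \<le> int k1}"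
  define A where "A = {u \<in> walks_ge k k1 k2. u \<noteq> [] \<and> (\<forall>x\<in>later_levels (int k1) u. int k1 < x)}"
  define E :: "step list set" where "E = (if k1 = k2 then {[]} else {})"
  have split: "walks_ge k k1 k2 = E \<union> R \<union> A"
    using assms by (auto simp: E_def R_def A_def walks_ge_def not_le)
  have bounded: "E \<subseteq> bounded_paths L J" "R \<subseteq> bounded_paths L J" "A \<subseteq> bounded_paths L J"
    using walks_ge_bounded[of k k1 k2] by (auto simp: E_def R_def A_def bounded_paths_def)
  have "Fge Q L J k k1 k2 = path_gf Q (E \<union> R) + path_gf Q A"
    unfolding Fge_eq_path_gf split
    by (rule path_gf_Un) (use bounded in \<open>auto simp: E_def R_def A_def not_le\<close>)
  also have "path_gf Q (E \<union> R) = path_gf Q E + path_gf Q R"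
    by (rule path_gf_Un) (use bounded in \<open>auto simp: E_def R_def\<close>)
  finally show ?thesis
    using assms by (simp add: E_def path_gf_Nil R_def A_def
        path_gf_walks_ge_revisiting path_gf_walks_ge_above)
qed

lemma in_single_steps_iff:
  "p \<in> single_steps k e \<longleftrightarrow> (\<exists>s. p = [s] \<and> step_ok Q L J (int k) s \<and> next_level (int k) s = e)"
  by (auto simp: single_steps_def)

lemma single_steps_subset_prime_walks: "single_steps k e \<subseteq> prime_walks k e c"
  by (auto simp: in_single_steps_iff prime_walks_def allowed_Cons)

definition arches :: "nat \<Rightarrow> nat \<Rightarrow> int \<Rightarrow> nat \<Rightarrow> nat \<Rightarrow> step list set" where
  "arches k c e i1 i2 = conc (conc (single_steps k (int (k + i1))) (walks_ge (k + c + 1) (k + i1) (k + i2)))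
     (single_steps (k + i2) e)"

(* Contains every index with a nonzero term: the first step rises by at most L, the last one
   falls by at most J. *)
definition arch_index :: "nat \<Rightarrow> nat \<Rightarrow> int \<Rightarrow> (nat \<times> nat) set" where
  "arch_index k c e = {(i1, i2). c < i1 \<and> c < i2 \<and> i1 \<le> L \<and> int (k + i2) \<le> e + int J}"

lemma finite_arch_index: "finite (arch_index k c e)"
  by (rule finite_subset[of _ "{..L} \<times> {..nat (e + int J)}"]) (auto simp: arch_index_def)

lemma in_archesE:
  assumes "u \<in> arches k c e i1 i2"
  obtains s1 mid s2 where "u = s1 # mid @ [s2]"
    "step_ok Q L J (int k) s1" "next_level (int k) s1 = int (k + i1)"
    "mid \<in> walks_ge (k + c + 1) (k + i1) (k + i2)"
    "step_ok Q L J (int (k + i2)) s2" "next_level (int (k + i2)) s2 = e"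
  using assms by (auto simp: arches_def in_conc_iff in_single_steps_iff)

lemma arches_subset_prime_walks: "arches k c e i1 i2 \<subseteq> prime_walks k e (int k + int c)"
proof
  fix p assume "p \<in> arches k c e i1 i2"
  then obtain s1 mid s2 where p: "p = s1 # mid @ [s2]"
    and s1: "step_ok Q L J (int k) s1" "next_level (int k) s1 = int (k + i1)"
    and mid: "mid \<in> walks_ge (k + c + 1) (k + i1) (k + i2)"
    and s2: "step_ok Q L J (int (k + i2)) s2" "next_level (int (k + i2)) s2 = e"
    by (rule in_archesE)
  have "allowed Q L J (int k) p" "end_level (int k) p = e"
    using s1 s2 mid by (simp_all add: p allowed_Cons allowed_append walks_ge_def)
  moreover have "inner_levels (int k) p = set (levels (int (k + i1)) mid)"
    using s1 by (simp add: p inner_levels_Cons_snoc)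
  ultimately show "p \<in> prime_walks k e (int k + int c)"
    using mid by (auto simp: prime_walks_def p walks_ge_def)
qed

lemma prime_walks_subset_arches:
  "prime_walks k e (int k + int c) \<subseteq> single_steps k e \<union> (\<Union>(i1, i2)\<in>arch_index k c e. arches k c e i1 i2)"
proof
  fix p assume p: "p \<in> prime_walks k e (int k + int c)"
  then obtain s1 p' where p1: "p = s1 # p'"
    by (cases p) (auto simp: prime_walks_def)
  show "p \<in> single_steps k e \<union> (\<Union>(i1, i2)\<in>arch_index k c e. arches k c e i1 i2)"
  proof (cases "p' = []")
    case True
    then show ?thesis
      using p p1 by (auto simp: in_single_steps_iff prime_walks_def allowed_Cons)
  next
    case False
    then obtain mid s2 where p2: "p' = mid @ [s2]"
      by (cases p' rule: rev_exhaust) auto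
    define a where "a = next_level (int k) s1"
    define b where "b = end_level a mid"
    have inner: "inner_levels (int k) p = set (levels a mid)"
      by (simp add: p1 p2 a_def inner_levels_Cons_snoc)
    have s1: "step_ok Q L J (int k) s1" and mid: "allowed Q L J a mid"
      and s2: "step_ok Q L J b s2" "next_level b s2 = e"
      and above: "\<forall>x\<in>set (levels a mid). int k + int c < x"
      using p inner by (auto simp: prime_walks_def p1 p2 allowed_Cons allowed_append a_def b_def)
    define i1 where "i1 = nat (a - int k)"
    define i2 where "i2 = nat (b - int k)"
    have i: "int (k + i1) = a" "int (k + i2) = b"
      using above start_in_levels[of a mid] end_level_in_levels[of a mid]
      by (auto simp: i1_def i2_def b_def)
    have "a \<le> int k + int L"
      using s1 by (cases s1) (auto simp: a_def)
    moreover have "b \<le> e + int J"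
      using s2 by (cases s2) auto
    ultimately have index: "(i1, i2) \<in> arch_index k c e"
      using i above start_in_levels[of a mid] end_level_in_levels[of a mid]
      by (auto simp: arch_index_def b_def)
    have "[s1] \<in> single_steps k (int (k + i1))" "[s2] \<in> single_steps (k + i2) e"
      using s1 s2 i by (auto simp: in_single_steps_iff a_def)
    moreover have "mid \<in> walks_ge (k + c + 1) (k + i1) (k + i2)"
      using mid above i by (auto simp: walks_ge_def b_def)
    ultimately have "([s1] @ mid) @ [s2] \<in> arches k c e i1 i2"
      unfolding arches_def by (intro append_in_conc)
    then show ?thesis
      by (intro UnI2 UN_I[OF index]) (simp add: p1 p2)
  qed
qed

lemma arches_disjoint:
  assumes "(i1, i2) \<noteq> (i1', i2')"
  shows "arches k c e i1 i2 \<inter> arches k c e i1' i2' = {}"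
proof -
  have "i1 = i1' \<and> i2 = i2'" if u1: "u \<in> arches k c e i1 i2" and u2: "u \<in> arches k c e i1' i2'" for u
  proof -
    obtain s1 mid s2 where "u = s1 # mid @ [s2]" "next_level (int k) s1 = int (k + i1)"
      "mid \<in> walks_ge (k + c + 1) (k + i1) (k + i2)"
      using u1 by (elim in_archesE) blast
    moreover obtain s1' mid' s2' where "u = s1' # mid' @ [s2']" "next_level (int k) s1' = int (k + i1')"
      "mid' \<in> walks_ge (k + c + 1) (k + i1') (k + i2')"
      using u2 by (elim in_archesE) blast
    ultimately show ?thesis
      by (auto simp: walks_ge_def)
  qed
  with assms show ?thesis
    by blast
qed

lemma path_gf_arches:
  "path_gf Q (arches k c e i1 i2) =
     qk Q L J k (int i1) * Fge Q L J (k + c + 1) (k + i1) (k + i2) * qk Q L J (k + i2) (e - int (k + i2))"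
proof -
  let ?first = "single_steps k (int (k + i1))" and ?mid = "walks_ge (k + c + 1) (k + i1) (k + i2)"
  have "conc ?first ?mid \<subseteq> bounded_paths L J"
    by (intro conc_bounded_paths single_steps_bounded walks_ge_bounded)
  then have "path_gf Q (arches k c e i1 i2) = path_gf Q (conc ?first ?mid) * path_gf Q (single_steps (k + i2) e)"
    unfolding arches_def
    by (rule path_gf_conc[OF _ single_steps_bounded]) (auto simp: in_single_steps_iff)
  also have "path_gf Q (conc ?first ?mid) = path_gf Q ?first * path_gf Q ?mid"
    by (rule path_gf_conc[OF single_steps_bounded walks_ge_bounded]) (auto simp: in_single_steps_iff)
  finally show ?thesis
    by (simp add: path_gf_single_steps Fge_eq_path_gf)
qed

lemma path_gf_prime_walks_arch_index:
  "path_gf Q (prime_walks k e (int k + int c)) = qk Q L J k (e - int k) +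
     (\<Sum>(i1, i2)\<in>arch_index k c e.
        qk Q L J k (int i1) * Fge Q L J (k + c + 1) (k + i1) (k + i2) * qk Q L J (k + i2) (e - int (k + i2)))"
proof -
  let ?arches = "\<Union>(i1, i2)\<in>arch_index k c e. arches k c e i1 i2"
  have arches_bounded: "arches k c e i1 i2 \<subseteq> bounded_paths L J" for i1 i2
    using arches_subset_prime_walks prime_walks_bounded by blast
  have split: "prime_walks k e (int k + int c) = single_steps k e \<union> ?arches"
  proof (rule subset_antisym[OF prime_walks_subset_arches])
    show "single_steps k e \<union> ?arches \<subseteq> prime_walks k e (int k + int c)"
      by (intro Un_least UN_least single_steps_subset_prime_walks)
        (auto simp: arches_subset_prime_walks[THEN subsetD])
  qed
  have disjoint: "single_steps k e \<inter> ?arches = {}"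
    by (auto simp: arches_def in_conc_iff in_single_steps_iff)
  have "path_gf Q (prime_walks k e (int k + int c)) = path_gf Q (single_steps k e) + path_gf Q ?arches"
    unfolding split by (rule path_gf_Un[OF single_steps_bounded _ disjoint]) (use arches_bounded in blast)
  also have "path_gf Q ?arches = (\<Sum>x\<in>arch_index k c e. path_gf Q (case x of (i1, i2) \<Rightarrow> arches k c e i1 i2))"
  proof (rule path_gf_UN[OF finite_arch_index])
    show "(case x of (i1, i2) \<Rightarrow> arches k c e i1 i2) \<subseteq> bounded_paths L J" for x
      using arches_bounded by (cases x) simp
    show "(case x of (i1, i2) \<Rightarrow> arches k c e i1 i2) \<inter> (case y of (i1, i2) \<Rightarrow> arches k c e i1 i2) = {}"
      if "x \<noteq> y" for x y
      using that by (cases x, cases y) (simp add: arches_disjoint)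
  qed
  finally show ?thesis
    by (simp add: path_gf_single_steps path_gf_arches case_prod_unfold)
qed

lemma path_gf_prime_walks:
  "path_gf Q (prime_walks k e (int k + int c)) = qk Q L J k (e - int k) +
     (\<Sum>(i1, i2) \<in> {(i1, i2). c < i1 \<and> c < i2 \<and>
          qk Q L J k (int i1) * Fge Q L J (k + c + 1) (k + i1) (k + i2) * qk Q L J (k + i2) (e - int (k + i2)) \<noteq> 0}.
        qk Q L J k (int i1) * Fge Q L J (k + c + 1) (k + i1) (k + i2) * qk Q L J (k + i2) (e - int (k + i2)))"
proof -
  define f where "f = (\<lambda>(i1, i2).
    qk Q L J k (int i1) * Fge Q L J (k + c + 1) (k + i1) (k + i2) * qk Q L J (k + i2) (e - int (k + i2)))"
  have "{(i1, i2). c < i1 \<and> c < i2 \<and> f (i1, i2) \<noteq> 0} \<subseteq> arch_index k c e"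
  proof clarify
    fix i1 i2 assume "c < i1" "c < i2" "f (i1, i2) \<noteq> 0"
    then have "qk Q L J k (int i1) \<noteq> 0" "qk Q L J (k + i2) (e - int (k + i2)) \<noteq> 0"
      by (auto simp: f_def)
    then obtain l j l' j' where "l \<le> L" "int l - int j = int i1"
      and "j' \<le> J" "int l' - int j' = e - int (k + i2)"
      using qk_eq_0 by (metis min.boundedE)
    with \<open>c < i1\<close> \<open>c < i2\<close> show "(i1, i2) \<in> arch_index k c e"
      by (auto simp: arch_index_def)
  qed
  then have "(\<Sum>x\<in>arch_index k c e. f x) = (\<Sum>x \<in> {(i1, i2). c < i1 \<and> c < i2 \<and> f (i1, i2) \<noteq> 0}. f x)"
    by (intro sum.mono_neutral_right finite_arch_index) (auto simp: arch_index_def)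
  then show ?thesis
    by (simp add: path_gf_prime_walks_arch_index f_def)
qed

lemma Aprime_arch_decomp:
  "Aprime Q L J k i = qk Q L J k (int i) +
     (\<Sum>(i1, i2) \<in> {(i1, i2). i < i1 \<and> i < i2 \<and>
          qk Q L J k (int i1) * Fge Q L J (k + i + 1) (k + i1) (k + i2)
            * qk Q L J (k + i2) (- (int i2 - int i)) \<noteq> 0}.
        qk Q L J k (int i1) * Fge Q L J (k + i + 1) (k + i1) (k + i2)
          * qk Q L J (k + i2) (- (int i2 - int i)))"
proof -
  have "int k + int i - int (k + i2) = - (int i2 - int i)" for i2
    by simp
  then show ?thesis
    by (simp only: Aprime_eq_path_gf path_gf_prime_walks) simp
qed

lemma Abar_arch_decomp:
  "Abar Q L J k i = qk Q L J k (- int i) +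
     (\<Sum>(i1, i2) \<in> {(i1, i2). 0 < i1 \<and> 0 < i2 \<and>
          qk Q L J k (int i1) * Fge Q L J (k + 1) (k + i1) (k + i2)
            * qk Q L J (k + i2) (- (int i + int i2)) \<noteq> 0}.
        qk Q L J k (int i1) * Fge Q L J (k + 1) (k + i1) (k + i2)
          * qk Q L J (k + i2) (- (int i + int i2)))"
proof -
  have "int k - int i - int (k + i2) = - (int i + int i2)" for i2
    by simp
  moreover have "Abar Q L J k i = path_gf Q (prime_walks k (int k - int i) (int k + int 0))"
    by (simp add: Abar_eq_path_gf)
  ultimately show ?thesis
    by (simp only: path_gf_prime_walks) simp
qed

end

theorem lemma2:
  fixes Q :: "nat \<Rightarrow> nat \<Rightarrow> real poly" and L J :: nat
  assumes nonneg: "\<forall>l\<le>L. \<forall>j\<le>J. \<forall>r. 0 \<le> coeff (Q l j) r"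
  shows
   "(\<forall>k k1. k \<le> k1 \<longrightarrow>
       Fge Q L J k k1 k1 = 1 + (\<Sum>m=k..k1. Abar Q L J k1 (k1 - m) * Fge Q L J k m k1))
  \<and> (\<forall>k k1 k2. k \<le> k1 \<and> k1 < k2 \<longrightarrow>
       Fge Q L J k k1 k2 = (\<Sum>m=k..k1. Abar Q L J k1 (k1 - m) * Fge Q L J k m k2)
                        + (\<Sum>m=k1+1..k2. Aprime Q L J k1 (m - k1) * Fge Q L J m m k2))
  \<and> (\<forall>k k1 k2. k \<le> k2 \<and> k2 < k1 \<longrightarrow>
       Fge Q L J k k1 k2 = (\<Sum>m=k..k1. Abar Q L J k1 (k1 - m) * Fge Q L J k m k2))
  \<and> (\<forall>k i. int i \<le> dup Q L J k \<longrightarrow>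
       Aprime Q L J k i = qk Q L J k (int i) +
         (\<Sum>(i1, i2) \<in> {(i1, i2). i < i1 \<and> i < i2 \<and>
              qk Q L J k (int i1) * Fge Q L J (k + i + 1) (k + i1) (k + i2)
                * qk Q L J (k + i2) (- (int i2 - int i)) \<noteq> 0}.
            qk Q L J k (int i1) * Fge Q L J (k + i + 1) (k + i1) (k + i2)
              * qk Q L J (k + i2) (- (int i2 - int i))))
  \<and> (\<forall>k i. int i \<le> ddown Q L J k \<longrightarrow>
       Abar Q L J k i = qk Q L J k (- int i) +
         (\<Sum>(i1, i2) \<in> {(i1, i2). 0 < i1 \<and> 0 < i2 \<and>
              qk Q L J k (int i1) * Fge Q L J (k + 1) (k + i1) (k + i2)
                * qk Q L J (k + i2) (- (int i + int i2)) \<noteq> 0}.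
            qk Q L J k (int i1) * Fge Q L J (k + 1) (k + i1) (k + i2)
              * qk Q L J (k + i2) (- (int i + int i2))))"
  apply (intro conjI allI impI)
  subgoal for k k1
    using Fge_first_passage[of k k1 _ _ _ k1] by simp
  subgoal for k k1 k2
    using Fge_first_passage[of k k1 _ _ _ k2] by simp
  subgoal for k k1 k2
    using Fge_first_passage[of k k1 _ _ _ k2] by simp
  subgoal by (rule Aprime_arch_decomp)
  subgoal by (rule Abar_arch_decomp)
  done

end
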